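(* Fix an integer base $B\ge 2$. Assume Dickson's conjecture holds. Then for every positive integer $t$ there exists a positive integer $N$ such that $N, N+1, \ldots, N+t-1$ are all economical base $B$.
   Context: For a positive integer $n$, $\delta(n)$ is the number of digits of $n$ in base $B$, i.e. $\delta(n)=k$ iff $B^{k-1}\le n<B^k$. Define $\delta'(1)=0$ and $\delta'(a)=\delta(a)$ for $a>1$. If $n=\prod_{i} p_i^{a_i}$ is the prime power factorisation, set $\phi(n)=\sum_i \big(\delta(p_i)+\delta'(a_i)\big)$ (with $\phi(1)=0$), and $h(n)=\delta(n)-\phi(n)$. $n$ is economical if $h(n)\ge 0$. Dickson's conjecture: for any finite family of linear functions $f_i(x)=a_i x+b_i$ ($i=1,\dots,s$) with integers $a_i\ge1$, $b_i$, if there is no integer $m>1$ dividing $f_1(x)\cdots f_s(x)$ for every integer $x$, then there are infinitely many positive integers $x$ for which $f_1(x),\dots,f_s(x)$ are all prime. *)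

theory Defs
  imports "HOL-Computational_Algebra.Primes"
begin

definition ndigits :: "nat \<Rightarrow> nat \<Rightarrow> nat" where
  "ndigits B n = (LEAST k. n < B ^ k)"

definition ndigits' :: "nat \<Rightarrow> nat \<Rightarrow> nat" where
  "ndigits' B a = (if a = 1 then 0 else ndigits B a)"

definition phi_digits :: "nat \<Rightarrow> nat \<Rightarrow> nat" where
  "phi_digits B n = (\<Sum>p\<in>prime_factors n. ndigits B p + ndigits' B (multiplicity p n))"

definition h_econ :: "nat \<Rightarrow> nat \<Rightarrow> int" where
  "h_econ B n = int (ndigits B n) - int (phi_digits B n)"

definition economical :: "nat \<Rightarrow> nat \<Rightarrow> bool" where
  "economical B n \<longleftrightarrow> h_econ B n \<ge> 0"

definition dickson_conjecture :: bool where
  "dickson_conjecture \<longleftrightarrow>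
     (\<forall>fs :: (int \<times> int) list.
        (\<forall>(a, b) \<in> set fs. a \<ge> 1) \<longrightarrow>
        \<not> (\<exists>m::int. m > 1 \<and> (\<forall>x::int. m dvd (\<Prod>(a, b) \<leftarrow> fs. a * x + b))) \<longrightarrow>
        infinite {x::nat. x > 0 \<and> (\<forall>(a, b) \<in> set fs. prime (a * int x + b))})"

end

theory Submission
  imports Defs "HOL-Number_Theory.Cong" "HOL-Library.Infinite_Set"
begin

text \<open>
  Take distinct primes \<open>q\<^sub>1, \<dots>, q\<^sub>t\<close> larger than \<open>t\<close> and with many digits, and (Chinese
  remainder theorem) an \<open>r\<close> with \<open>(t!)\<^sup>2 | r\<close> and \<open>q\<^sub>j\<^sup>2\<close> dividing \<open>r + j\<close> exactly. Put
  \<open>c\<^sub>j = j q\<^sub>j\<^sup>2\<close> and \<open>L = (t!)\<^sup>2 \<Prod> q\<^sub>j\<^sup>2\<close>; then \<open>L x + r + j = c\<^sub>j (a\<^sub>j x + b\<^sub>j)\<close>, and the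
  forms \<open>a\<^sub>j x + b\<^sub>j\<close> have no fixed prime divisor, since \<open>a\<^sub>j, b\<^sub>j\<close> are coprime and every
  prime \<open>\<le> t\<close> divides every \<open>a\<^sub>j\<close>. Dickson's conjecture gives an \<open>x\<close> making all of them
  primes \<open>p\<^sub>j > c\<^sub>j\<close>, so \<open>N = L x + r + 1\<close> satisfies \<open>N + j - 1 = j q\<^sub>j\<^sup>2 p\<^sub>j\<close>. Such a number
  has at least \<open>2 \<delta>(q\<^sub>j) + \<delta>(p\<^sub>j) - 2\<close> digits, while its factorisation costs at most
  \<open>\<phi>(j) + \<delta>(q\<^sub>j) + 2 + \<delta>(p\<^sub>j)\<close>; it is economical as soon as \<open>\<delta>(q\<^sub>j) \<ge> \<phi>(j) + 4\<close>.
\<close>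

lemma ndigits_le_iff:
  assumes "B \<ge> 2"
  shows "ndigits B n \<le> k \<longleftrightarrow> n < B ^ k"
proof
  have "n < 2 ^ n" by (rule less_exp)
  also have "(2::nat) ^ n \<le> B ^ n" using assms by (simp add: power_mono)
  finally have "n < B ^ ndigits B n"
    unfolding ndigits_def by (rule LeastI)
  also assume "ndigits B n \<le> k"
  then have "B ^ ndigits B n \<le> B ^ k" using assms by (intro power_increasing) auto
  finally show "n < B ^ k" .
next
  assume "n < B ^ k"
  then show "ndigits B n \<le> k" unfolding ndigits_def by (rule Least_le)
qed

lemma ndigits_pos:
  assumes "B \<ge> 2" "n \<ge> 1"
  shows "ndigits B n \<ge> 1"
  using ndigits_le_iff[OF assms(1), of n 0] assms(2) by simp

lemma power_ndigits_pred_le: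
  assumes "B \<ge> 2" "n \<ge> 1"
  shows "B ^ (ndigits B n - 1) \<le> n"
  using ndigits_le_iff[OF assms(1), of n "ndigits B n - 1"] ndigits_pos[OF assms]
  by (auto simp: not_less[symmetric])

lemma phi_digits_mult_prime_power:
  assumes "c > 0" "prime q" "\<not> q dvd c" "e > 0"
  shows "phi_digits B (c * q ^ e) = phi_digits B c + ndigits B q + ndigits' B e"
proof -
  have qe: "q ^ e \<noteq> 0" using assms(2) by (simp add: prime_gt_0_nat)
  have "prime_factors (q ^ e) = {q}"
    using assms(2,4) by (simp add: prime_factorization_prime_power)
  then have factors: "prime_factors (c * q ^ e) = insert q (prime_factors c)"
    using prime_factors_product[of c "q ^ e"] assms(1) qe by auto
  have q_notin: "q \<notin> prime_factors c" using assms(3) by auto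
  have mult_distrib: "multiplicity p (c * q ^ e) = multiplicity p c + multiplicity p (q ^ e)"
    if "prime p" for p
    using assms(1) qe that by (intro prime_elem_multiplicity_mult_distrib) auto
  have "multiplicity q (c * q ^ e) = e"
    using mult_distrib[OF assms(2)] assms(2,3)
    by (simp add: not_dvd_imp_multiplicity_0 multiplicity_same_power)
  moreover have "multiplicity p (c * q ^ e) = multiplicity p c" if "p \<in> prime_factors c" for p
  proof -
    have "prime p" "p \<noteq> q" using that q_notin by auto
    then have "\<not> p dvd q ^ e" using assms(2) by (metis prime_dvd_power primes_dvd_imp_eq)
    then show ?thesis using mult_distrib[OF \<open>prime p\<close>] by (simp add: not_dvd_imp_multiplicity_0)
  qed
  ultimately show ?thesis
    unfolding phi_digits_def factors using q_notin by simp
qed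

lemma economical_mult_prime_square_prime:
  assumes B: "B \<ge> 2" and j: "j \<ge> 1"
    and q: "prime q" "\<not> q dvd j" "B ^ (phi_digits B j + 3) \<le> q"
    and p: "prime p" "\<not> p dvd j * q ^ 2"
  shows "economical B (j * q ^ 2 * p)"
proof -
  define dq dp where "dq = ndigits B q" and "dp = ndigits B p"
  have q1: "q \<ge> 1" and p1: "p \<ge> 1" using q(1) p(1) by (auto simp: prime_gt_0_nat Suc_le_eq)
  have dq_big: "dq \<ge> phi_digits B j + 4"
    using ndigits_le_iff[OF B, of q "phi_digits B j + 3"] q(3) unfolding dq_def by simp
  have "ndigits' B 2 \<le> 2"
  proof -
    have "(2::nat) < 2 ^ 2" by simp
    also have "(2::nat) ^ 2 \<le> B ^ 2" using B by (intro power_mono) auto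
    finally show ?thesis unfolding ndigits'_def using ndigits_le_iff[OF B] by simp
  qed
  moreover have "phi_digits B (j * q ^ 2) = phi_digits B j + ndigits B q + ndigits' B 2"
    using j q by (intro phi_digits_mult_prime_power) auto
  moreover have "phi_digits B (j * q ^ 2 * p ^ 1) = phi_digits B (j * q ^ 2) + ndigits B p + ndigits' B 1"
    using j q p by (intro phi_digits_mult_prime_power) (auto simp: prime_gt_0_nat)
  ultimately have phi_le: "phi_digits B (j * q ^ 2 * p) \<le> phi_digits B j + dq + 2 + dp"
    unfolding dq_def dp_def ndigits'_def by simp
  have "B ^ (2 * (dq - 1) + (dp - 1)) = B ^ (dq - 1) * B ^ (dq - 1) * B ^ (dp - 1)"
    by (simp add: power_add mult_2)
  also have "\<dots> \<le> q * q * p"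
    using power_ndigits_pred_le[OF B q1] power_ndigits_pred_le[OF B p1]
    unfolding dq_def dp_def by (intro mult_mono) auto
  also have "\<dots> \<le> j * q ^ 2 * p" using j by (simp add: power2_eq_square)
  finally have "2 * (dq - 1) + (dp - 1) < ndigits B (j * q ^ 2 * p)"
    using ndigits_le_iff[OF B] by (simp add: not_le[symmetric])
  moreover have "dq \<ge> 1" "dp \<ge> 1" using ndigits_pos[OF B] q1 p1 unfolding dq_def dp_def by auto
  ultimately show ?thesis
    unfolding economical_def h_econ_def using phi_le dq_big by linarith
qed

lemma prime_dvd_prod_list_iff:
  "prime p \<Longrightarrow> p dvd prod_list xs \<longleftrightarrow> (\<exists>x\<in>set xs. p dvd x)"
  using prime_dvd_prod_mset_iff[of p "mset xs"] by (simp add: prod_mset_prod_list Bex_def)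

lemma prime_dvd_coprime_imp_not_dvd:
  assumes "prime p" "coprime a b" "p dvd a"
  shows "\<not> p dvd b"
  using coprime_common_divisor[OF assms(2,3)] assms(1) not_prime_unit by blast

lemma card_linear_roots_mod_prime_le_1:
  fixes a b q n :: int
  assumes q: "prime q" and "coprime a b" and "n < q"
  shows "card {x \<in> {0..n}. q dvd a * x + b} \<le> 1"
proof -
  have "x = y" if "x \<in> {0..n}" "y \<in> {0..n}" "q dvd a * x + b" "q dvd a * y + b" for x y
  proof -
    have "\<not> q dvd a"
      using prime_dvd_coprime_imp_not_dvd[OF q \<open>coprime a b\<close>] that(3) by (auto simp: dvd_add_right_iff)
    moreover have "q dvd a * (x - y)"
      using dvd_diff[OF that(3,4)] by (simp add: algebra_simps)
    ultimately have "q dvd x - y" using q by (simp add: prime_dvd_mult_iff)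
    moreover have "\<bar>x - y\<bar> < \<bar>q\<bar>" using that(1,2) \<open>n < q\<close> by auto
    ultimately show "x = y" using dvd_imp_le_int[of "x - y" q] by force
  qed
  moreover have fin: "finite {x \<in> {0..n}. q dvd a * x + b}" by (rule finite_subset[of _ "{0..n}"]) auto
  ultimately show ?thesis using card_le_Suc0_iff_eq[OF fin] by auto
qed

lemma no_fixed_prime_divisor:
  fixes fs :: "(int \<times> int) list" and q :: int
  assumes q: "prime q" and coprime: "\<forall>(a, b) \<in> set fs. coprime a b"
    and small: "q \<le> int (length fs) \<Longrightarrow> \<forall>(a, b) \<in> set fs. q dvd a"
  shows "\<exists>x. \<not> q dvd (\<Prod>(a, b) \<leftarrow> fs. a * x + b)"
proof -
  have prod_iff: "q dvd (\<Prod>(a, b) \<leftarrow> fs. a * x + b) \<longleftrightarrow> (\<exists>(a, b) \<in> set fs. q dvd a * x + b)"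
    for x by (simp add: prime_dvd_prod_list_iff[OF q] case_prod_beta)
  show ?thesis
  proof (cases "q \<le> int (length fs)")
    case True
    have "\<not> q dvd b" if "(a, b) \<in> set fs" for a b
    proof -
      have "coprime a b" "q dvd a" using small[OF True] coprime that by auto
      then show ?thesis by (rule prime_dvd_coprime_imp_not_dvd[OF q])
    qed
    then have "\<not> q dvd (\<Prod>(a, b) \<leftarrow> fs. a * 0 + b)" using prod_iff[of 0] by auto
    then show ?thesis by blast
  next
    case False
    define n where "n = int (length fs)"
    define roots where "roots = (\<lambda>(a, b). {x \<in> {0..n}. q dvd a * x + b})"
    have "card (\<Union>(roots ` set fs)) \<le> (\<Sum>ab\<in>set fs. card (roots ab))"
      by (rule card_UN_le) simp
    also have "\<dots> \<le> (\<Sum>ab\<in>set fs. 1)"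
      using card_linear_roots_mod_prime_le_1[OF q] coprime False
      unfolding roots_def n_def by (intro sum_mono) auto
    also have "\<dots> \<le> length fs" by (simp add: card_length)
    also have "\<dots> < card {0..n}" unfolding n_def by simp
    finally have "\<Union>(roots ` set fs) \<noteq> {0..n}" by auto
    moreover have "\<Union>(roots ` set fs) \<subseteq> {0..n}" unfolding roots_def by auto
    ultimately obtain x where "x \<in> {0..n}" "x \<notin> \<Union>(roots ` set fs)" by blast
    then show ?thesis using prod_iff[of x] unfolding roots_def by auto
  qed
qed

lemma no_fixed_divisor:
  fixes fs :: "(int \<times> int) list"
  assumes "\<forall>(a, b) \<in> set fs. coprime a b"
    and "\<forall>q. prime q \<and> q \<le> int (length fs) \<longrightarrow> (\<forall>(a, b) \<in> set fs. q dvd a)"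
  shows "\<not> (\<exists>m::int. m > 1 \<and> (\<forall>x. m dvd (\<Prod>(a, b) \<leftarrow> fs. a * x + b)))"
proof
  assume "\<exists>m::int. m > 1 \<and> (\<forall>x. m dvd (\<Prod>(a, b) \<leftarrow> fs. a * x + b))"
  then obtain m :: int where m: "m > 1" "\<And>x. m dvd (\<Prod>(a, b) \<leftarrow> fs. a * x + b)" by blast
  obtain q where q: "prime q" "q dvd m" using prime_factor_int[of m] m(1) by auto
  have "q \<le> int (length fs) \<Longrightarrow> \<forall>(a, b) \<in> set fs. q dvd a" using assms(2) q(1) by blast
  then obtain x where "\<not> q dvd (\<Prod>(a, b) \<leftarrow> fs. a * x + b)"
    using no_fixed_prime_divisor[OF q(1) assms(1)] by blast
  then show False using q(2) m(2) dvd_trans by blast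
qed

lemma exists_inj_primes_above: "\<exists>q :: nat \<Rightarrow> nat. inj q \<and> (\<forall>j. prime (q j) \<and> M < q j)"
proof -
  define S where "S = {p :: nat. prime p \<and> M < p}"
  have "S = {p. prime p} - {..M}" unfolding S_def by auto
  then have "infinite S" using primes_infinite by auto
  then have "inj (enumerate S) \<and> (\<forall>j. enumerate S j \<in> S)"
    using inj_enumerate enumerate_in_set by blast
  then show ?thesis unfolding S_def by blast
qed

lemma exact_square_dvd_if_cong:
  fixes n m :: nat
  assumes "[n = m ^ 2] (mod m ^ 3)" and "m > 1"
  shows "m ^ 2 dvd n" and "\<not> m ^ 3 dvd n"
proof -
  have "m ^ 2 dvd m ^ 3" by (rule le_imp_power_dvd) simp
  with assms(1) have "[n = m ^ 2] (mod m ^ 2)" by (rule cong_dvd_modulus_nat)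
  then show "m ^ 2 dvd n" by (simp add: cong_dvd_iff)
  have "m ^ 2 < m ^ 3" using assms(2) by (simp add: power_strict_increasing)
  then have "\<not> m ^ 3 dvd m ^ 2" using assms(2) by (simp add: nat_dvd_not_less)
  then show "\<not> m ^ 3 dvd n" using cong_dvd_iff[OF assms(1)] by simp
qed

lemma mult_dvd_fact_square:
  fixes i j n :: nat
  assumes "1 \<le> i" "i \<le> n" "1 \<le> j" "j \<le> n"
  shows "i * j dvd (fact n) ^ 2"
proof -
  have "i * j dvd fact n * fact n" using assms by (intro mult_dvd_mono dvd_fact)
  then show ?thesis by (simp add: power2_eq_square)
qed

lemma eq_if_dvd_shifts:
  fixes p m i j n :: nat
  assumes "p dvd m + i" "p dvd m + j" "i \<le> n" "j \<le> n" "n < p"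
  shows "i = j"
proof (rule ccontr)
  assume "i \<noteq> j"
  have "int p dvd int (m + i) - int (m + j)"
    using assms(1,2) by (intro dvd_diff) (simp_all only: int_dvd_int_iff)
  then have "int p dvd int i - int j" by simp
  moreover have "int i - int j \<noteq> 0" using \<open>i \<noteq> j\<close> by simp
  ultimately have "\<bar>int p\<bar> \<le> \<bar>int i - int j\<bar>" using dvd_imp_le_int by blast
  then show False using assms(3-5) by arith
qed

lemma exists_shift_with_exact_square_divisors:
  fixes q :: "nat \<Rightarrow> nat"
  assumes prime: "\<And>j. j \<in> {1..t} \<Longrightarrow> prime (q j)"
    and large: "\<And>j. j \<in> {1..t} \<Longrightarrow> t < q j"
    and inj: "inj_on q {1..t}"
  shows "\<exists>r. (fact t) ^ 2 dvd r \<and> (\<forall>j\<in>{1..t}. q j ^ 2 dvd r + j \<and> \<not> q j ^ 3 dvd r + j)"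
proof -
  define m where "m i = (if i = 0 then (fact t) ^ 2 else q i ^ 3)" for i
  \<comment> \<open>\<open>u j + j = q\<^sub>j\<^sup>3 + q\<^sub>j\<^sup>2\<close>; the extra \<open>q\<^sub>j\<^sup>3\<close> avoids truncated subtraction.\<close>
  define u where "u i = (if i = 0 then 0 else q i ^ 3 + q i ^ 2 - i)" for i
  have "coprime (m i) (m j)" if "i \<in> {0..t}" "j \<in> {0..t}" "i \<noteq> j" for i j
  proof -
    have "coprime (fact t) (q k)" if "k \<in> {1..t}" for k
    proof -
      have "\<not> q k dvd fact t" using prime_dvd_fact_iff[OF prime[OF that]] large[OF that] by simp
      then have "coprime (q k) (fact t)" by (rule prime_imp_coprime[OF prime[OF that]])
      then show ?thesis by (simp add: coprime_commute)
    qed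
    moreover have "coprime (q i) (q j)" if "i \<in> {1..t}" "j \<in> {1..t}" "i \<noteq> j"
      using that prime inj by (simp add: primes_coprime inj_on_eq_iff)
    ultimately show ?thesis
      using that unfolding m_def by (auto simp: coprime_commute)
  qed
  then obtain r where r: "\<forall>i\<in>{0..t}. [r = u i] (mod m i)"
    using chinese_remainder_nat[of "{0..t}" m u] by blast
  have "(fact t) ^ 2 dvd r" using r[rule_format, of 0] unfolding m_def u_def by (simp add: cong_0_iff)
  moreover have "q j ^ 2 dvd r + j \<and> \<not> q j ^ 3 dvd r + j" if j: "j \<in> {1..t}" for j
  proof -
    have "q j \<le> q j ^ 3" using prime_gt_0_nat[OF prime[OF j]] by (intro self_le_power) auto
    then have "u j + j = q j ^ 3 + q j ^ 2" using j large[OF j] unfolding u_def by auto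
    moreover have "[r = u j] (mod m j)" using r j by simp
    then have "[r + j = u j + j] (mod q j ^ 3)"
      using j by (simp add: m_def cong_add_rcancel_nat)
    ultimately have "[r + j = q j ^ 2] (mod q j ^ 3)" by (simp add: cong_def)
    then show ?thesis using exact_square_dvd_if_cong prime_gt_1_nat[OF prime[OF j]] by simp
  qed
  ultimately show ?thesis by blast
qed

locale economical_run_setup =
  fixes t r :: nat and q :: "nat \<Rightarrow> nat"
  assumes prime_q: "j \<in> {1..t} \<Longrightarrow> prime (q j)"
    and t_less_q: "j \<in> {1..t} \<Longrightarrow> t < q j"
    and fact_square_dvd_r: "(fact t) ^ 2 dvd r"
    and square_dvd_shift: "j \<in> {1..t} \<Longrightarrow> q j ^ 2 dvd r + j"
    and cube_not_dvd_shift: "j \<in> {1..t} \<Longrightarrow> \<not> q j ^ 3 dvd r + j"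
begin

text \<open>\<open>cofactor j\<close>, \<open>modulus\<close>, \<open>slope j\<close> and \<open>offset j\<close> are \<open>c\<^sub>j\<close>, \<open>L\<close>, \<open>a\<^sub>j\<close> and \<open>b\<^sub>j\<close> above.\<close>

definition cofactor :: "nat \<Rightarrow> nat" where "cofactor j = j * q j ^ 2"
definition modulus :: nat where "modulus = (fact t) ^ 2 * (\<Prod>j\<in>{1..t}. q j ^ 2)"
definition slope :: "nat \<Rightarrow> nat" where "slope j = modulus div cofactor j"
definition offset :: "nat \<Rightarrow> nat" where "offset j = (r + j) div cofactor j"
definition family :: "(int \<times> int) list"
  where "family = map (\<lambda>j. (int (slope j), int (offset j))) [1..<t + 1]"

lemma cofactor_pos: "j \<in> {1..t} \<Longrightarrow> 0 < cofactor j"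
  using prime_q by (auto simp: cofactor_def prime_gt_0_nat)

lemma modulus_pos: "0 < modulus"
  using prime_q by (auto simp: modulus_def prime_gt_0_nat intro!: prod_pos)

lemma q_square_dvd_prod: "j \<in> {1..t} \<Longrightarrow> q j ^ 2 dvd (\<Prod>j\<in>{1..t}. q j ^ 2)"
  by (rule dvd_prodI) auto

lemma cofactor_dvd_modulus:
  assumes j: "j \<in> {1..t}"
  shows "cofactor j dvd modulus"
proof -
  have "j dvd (fact t) ^ 2" using mult_dvd_fact_square[of 1 t j] j by simp
  then show ?thesis
    using q_square_dvd_prod[OF j] unfolding cofactor_def modulus_def by (rule mult_dvd_mono)
qed

lemma cofactor_dvd_shift:
  assumes j: "j \<in> {1..t}"
  shows "cofactor j dvd r + j"
proof -
  have "j dvd (fact t) ^ 2" using mult_dvd_fact_square[of 1 t j] j by simp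
  then have "j dvd r" using fact_square_dvd_r by (rule dvd_trans)
  then have "j dvd r + j" by simp
  moreover note square_dvd_shift[OF j]
  moreover have "coprime j (q j ^ 2)"
  proof -
    have "\<not> q j dvd j" using t_less_q[OF j] j by (auto dest: dvd_imp_le)
    then have "coprime (q j) j" by (rule prime_imp_coprime[OF prime_q[OF j]])
    then show ?thesis by (simp add: coprime_commute)
  qed
  ultimately show ?thesis unfolding cofactor_def by (rule divides_mult)
qed

lemma cofactor_mult_slope: "j \<in> {1..t} \<Longrightarrow> cofactor j * slope j = modulus"
  using cofactor_dvd_modulus by (simp add: slope_def)

lemma cofactor_mult_offset: "j \<in> {1..t} \<Longrightarrow> cofactor j * offset j = r + j"
  using cofactor_dvd_shift by (simp add: offset_def)

lemma cofactor_mult_linear: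
  assumes "j \<in> {1..t}"
  shows "cofactor j * (slope j * x + offset j) = modulus * x + (r + j)"
proof -
  have "cofactor j * (slope j * x + offset j) = cofactor j * slope j * x + cofactor j * offset j"
    by (simp add: algebra_simps)
  then show ?thesis using cofactor_mult_slope[OF assms] cofactor_mult_offset[OF assms] by simp
qed

lemma slope_pos:
  assumes "j \<in> {1..t}"
  shows "0 < slope j"
proof (rule gr0I)
  assume "slope j = 0"
  then show False using cofactor_mult_slope[OF assms] modulus_pos by simp
qed

lemma prime_dvd_slope:
  assumes p: "prime p" "p \<le> t" and j: "j \<in> {1..t}"
  shows "p dvd slope j"
proof -
  have "p * j dvd (fact t) ^ 2"
    using mult_dvd_fact_square[of p t j] prime_gt_0_nat[OF p(1)] p(2) j by simp
  then have "p * j * q j ^ 2 dvd modulus"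
    using q_square_dvd_prod[OF j] unfolding modulus_def by (rule mult_dvd_mono)
  then have "cofactor j * p dvd cofactor j * slope j"
    using cofactor_mult_slope[OF j] by (simp add: cofactor_def ac_simps)
  then show ?thesis using cofactor_pos[OF j] by (simp add: nat_mult_dvd_cancel1)
qed

lemma prime_dvd_modulus_cases:
  assumes p: "prime p" and "p dvd modulus"
  shows "p \<le> t \<or> (\<exists>k\<in>{1..t}. p = q k)"
proof -
  have "p dvd fact t \<or> (\<exists>k\<in>{1..t}. p dvd q k)"
    using assms by (simp add: modulus_def prime_dvd_mult_iff prime_dvd_power_iff prime_dvd_prod_iff)
  then show ?thesis
    using prime_dvd_fact_iff[OF p] primes_dvd_imp_eq[OF p] prime_q by blast
qed

lemma coprime_slope_offset:
  assumes j: "j \<in> {1..t}"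
  shows "coprime (slope j) (offset j)"
proof (rule ccontr)
  assume "\<not> coprime (slope j) (offset j)"
  then obtain p where p: "prime p" "p dvd slope j" "p dvd offset j"
    using prime_factor_nat[of "gcd (slope j) (offset j)"] by (auto simp: coprime_iff_gcd_eq_1)
  have "p * cofactor j dvd offset j * cofactor j" using p(3) by (rule mult_dvd_mono) simp
  then have p_cofactor: "p * cofactor j dvd r + j"
    using cofactor_mult_offset[OF j] by (simp add: mult.commute)
  have "p dvd modulus"
    using p(2) cofactor_mult_slope[OF j] by (metis dvd_mult)
  then consider "p \<le> t" | k where "k \<in> {1..t}" "p = q k"
    using prime_dvd_modulus_cases p(1) by blast
  then show False
  proof cases
    case 1
    have "p * j dvd (fact t) ^ 2"
      using mult_dvd_fact_square[of p t j] prime_gt_0_nat[OF p(1)] 1 j by simp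
    then have "p * j dvd r" using fact_square_dvd_r by (rule dvd_trans)
    moreover have "p * j * q j ^ 2 dvd r + j" using p_cofactor by (simp add: cofactor_def mult.assoc)
    then have "p * j dvd r + j" by (rule dvd_mult_left)
    ultimately have "p * j dvd (r + j) - r" by (rule dvd_diff_nat[rotated])
    then have "p * j \<le> 1 * j" using j by (auto dest: dvd_imp_le)
    then show False using prime_gt_1_nat[OF p(1)] j by (simp only: mult_le_cancel2) auto
  next
    case (2 k)
    show False
    proof (cases "k = j")
      case True
      have "q j ^ 3 dvd p * cofactor j"
        using 2 True unfolding cofactor_def by (simp add: power3_eq_cube power2_eq_square)
      then show False using p_cofactor cube_not_dvd_shift[OF j] dvd_trans by blast
    next
      case False
      have "p dvd r + k" using square_dvd_shift[OF 2(1)] 2(2) by (metis dvd_mult_left power2_eq_square)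
      moreover have "p dvd r + j" using p_cofactor by (rule dvd_mult_left)
      ultimately show False
        using eq_if_dvd_shifts[of p r k j t] False 2 j t_less_q[OF 2(1)] by auto
    qed
  qed
qed

lemma set_family: "set family = (\<lambda>j. (int (slope j), int (offset j))) ` {1..t}"
  by (auto simp: family_def)

lemma family_no_fixed_divisor:
  "\<not> (\<exists>m::int. m > 1 \<and> (\<forall>x. m dvd (\<Prod>(a, b) \<leftarrow> family. a * x + b)))"
proof (rule no_fixed_divisor)
  show "\<forall>(a, b) \<in> set family. coprime a b"
    unfolding set_family using coprime_slope_offset by simp
  show "\<forall>p. prime p \<and> p \<le> int (length family) \<longrightarrow> (\<forall>(a, b) \<in> set family. p dvd a)"
  proof (intro allI impI)
    fix p :: int assume p: "prime p \<and> p \<le> int (length family)"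
    then have "p \<ge> 0" by (simp add: prime_ge_0_int)
    have "prime (nat p)" using p prime_int_nat_transfer by blast
    have "length family = t" by (simp add: family_def)
    then have "nat p \<le> t" using p by linarith
    have "p dvd int (slope j)" if "j \<in> {1..t}" for j
      using prime_dvd_slope[OF \<open>prime (nat p)\<close> \<open>nat p \<le> t\<close> that] \<open>p \<ge> 0\<close>
      by (metis int_dvd_int_iff nat_0_le)
    then show "\<forall>(a, b) \<in> set family. p dvd a" unfolding set_family by simp
  qed
qed

lemma exists_prime_values:
  assumes dickson_conjecture
  shows "\<exists>x. \<forall>j\<in>{1..t}. prime (slope j * x + offset j) \<and> cofactor j < slope j * x + offset j"
proof -
  have "\<forall>(a, b) \<in> set family. a \<ge> 1" using slope_pos by (auto simp: set_family Suc_le_eq)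
  moreover note family_no_fixed_divisor
  moreover have "(\<forall>(a, b) \<in> set family. a \<ge> 1) \<longrightarrow>
      \<not> (\<exists>m::int. m > 1 \<and> (\<forall>x. m dvd (\<Prod>(a, b) \<leftarrow> family. a * x + b))) \<longrightarrow>
      infinite {x. x > 0 \<and> (\<forall>(a, b) \<in> set family. prime (a * int x + b))}"
    using assms unfolding dickson_conjecture_def by (rule spec)
  ultimately have "infinite {x. x > 0 \<and> (\<forall>(a, b) \<in> set family. prime (a * int x + b))}"
    by blast
  then obtain x where x: "x > modulus" "\<forall>(a, b) \<in> set family. prime (a * int x + b)"
    unfolding infinite_nat_iff_unbounded by blast
  have "prime (slope j * x + offset j)" if "j \<in> {1..t}" for j
    using x(2) that unfolding set_family by (auto simp flip: of_nat_mult of_nat_add)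
  moreover have "cofactor j < slope j * x + offset j" if j: "j \<in> {1..t}" for j
  proof -
    have "cofactor j \<le> modulus" using cofactor_dvd_modulus[OF j] modulus_pos by (rule dvd_imp_le)
    also have "\<dots> < x" by (rule x(1))
    also have "\<dots> \<le> slope j * x" using slope_pos[OF j] by simp
    also have "\<dots> \<le> slope j * x + offset j" by simp
    finally show ?thesis .
  qed
  ultimately show ?thesis by blast
qed

lemma economical_shift:
  assumes B: "B \<ge> 2" and j: "j \<in> {1..t}" and q_large: "B ^ (phi_digits B j + 3) \<le> q j"
    and prime: "prime (slope j * x + offset j)" and large: "cofactor j < slope j * x + offset j"
  shows "economical B (modulus * x + r + j)"
proof -
  have "\<not> q j dvd j" using t_less_q[OF j] j by (auto dest: dvd_imp_le)
  moreover have "\<not> slope j * x + offset j dvd j * q j ^ 2"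
    using large cofactor_pos[OF j] unfolding cofactor_def by (auto dest: dvd_imp_le)
  ultimately have "economical B (j * q j ^ 2 * (slope j * x + offset j))"
    using j prime_q[OF j] by (intro economical_mult_prime_square_prime[OF B _ _ _ q_large prime]) auto
  moreover have "j * q j ^ 2 * (slope j * x + offset j) = modulus * x + r + j"
    using cofactor_mult_linear[OF j] by (simp add: cofactor_def)
  ultimately show ?thesis by simp
qed

end

lemma exists_economical_run_setup: "\<exists>r q. economical_run_setup t r q \<and> (\<forall>j. M < q j)"
proof -
  obtain q :: "nat \<Rightarrow> nat" where q: "inj q" "\<And>j. prime (q j)" "\<And>j. t + M < q j"
    using exists_inj_primes_above[of "t + M"] by blast
  have "inj_on q {1..t}" using q(1) by (rule inj_on_subset) simp
  moreover have large: "t < q j" for j using q(3)[of j] by simp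
  ultimately obtain r where
    "(fact t) ^ 2 dvd r" "\<forall>j\<in>{1..t}. q j ^ 2 dvd r + j \<and> \<not> q j ^ 3 dvd r + j"
    using exists_shift_with_exact_square_divisors[of t q] q(2) by blast
  then have "economical_run_setup t r q" using q(2) large by unfold_locales auto
  moreover have "M < q j" for j using q(3)[of j] by simp
  ultimately show ?thesis by blast
qed

theorem mainTheorem6:
  fixes B :: nat
  assumes "B \<ge> 2" and "dickson_conjecture"
  shows "\<forall>t::nat. t > 0 \<longrightarrow> (\<exists>N::nat. N > 0 \<and> (\<forall>i<t. economical B (N + i)))"
proof (intro allI impI)
  fix t :: nat
  define K where "K = (\<Sum>j\<in>{1..t}. phi_digits B j)"
  obtain r q where run_setup: "economical_run_setup t r q" and q_large: "\<And>j. B ^ (K + 3) < q j"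
    using exists_economical_run_setup by blast
  interpret run: economical_run_setup t r q by (rule run_setup)
  obtain x where x: "\<forall>j\<in>{1..t}. prime (run.slope j * x + run.offset j) \<and>
      run.cofactor j < run.slope j * x + run.offset j"
    using run.exists_prime_values assms(2) by blast
  have "economical B (run.modulus * x + r + (i + 1))" if "i < t" for i
  proof -
    have j: "i + 1 \<in> {1..t}" using that by simp
    have "phi_digits B (i + 1) \<le> K" unfolding K_def using j by (intro member_le_sum) auto
    then have "B ^ (phi_digits B (i + 1) + 3) \<le> B ^ (K + 3)"
      using assms(1) by (intro power_increasing) auto
    also have "\<dots> \<le> q (i + 1)" using q_large[of "i + 1"] by simp
    finally show ?thesis
      using x j by (intro run.economical_shift[OF assms(1) j]) auto
  qed
  then show "\<exists>N::nat. N > 0 \<and> (\<forall>i<t. economical B (N + i))"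
    by (intro exI[of _ "run.modulus * x + r + 1"]) (simp add: ac_simps)
qed
end
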